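(* A set $F$ of pairs $(K,a)$ ($K$ a graph, $a\in\mathbb{Z}_2^{*V(K)}$, taken up to isomorphism) is a full graph fibration if and only if $F(K)$ is a normal subgroup of $\mathbb{Z}_2^{*V(K)}$ for every graph $K$ and, for every injective graph homomorphism $\iota\colon H\to K$ between any two graphs, $\iota(F(H))\subset F(K)$.
   Context: Graphs are finite, undirected, without multiple edges, loops allowed, considered up to isomorphism; $N_k$ is the edgeless graph on $k$ vertices. For a set $V$, $\mathbb{Z}_2^{*V}$ is the group generated by $V$ subject to $v^2=e$; a map $\phi\colon V\to V'$ induces a homomorphism $\mathbb{Z}_2^{*V}\to\mathbb{Z}_2^{*V'}$, also denoted $\phi$. Pairs are taken up to the equivalence $(K,a)\equiv(K',\phi(a))$ for isomorphisms $\phi\colon K\to K'$, and $F(K):=\{a\mid (K,a)\in F\}$. A vertex overlap of graphs $K,H$ is a subset $f\subset V(K)\times V(H)$ in which each vertex occurs at most once; $K\cup_fH$ is the quotient of $K\sqcup H$ identifying $v$ with $w$ for $(v,w)\in f$ (an edge between two vertices of the quotient iff there is one between some representatives); $f_K,f_H$ are the induced maps into $V(K\cup_fH)$. A graph fibration is such a set $F$ with $(N_0,e),(N_1,e)\in F$ and: (F1) each $F(K)$ is empty or a normal subgroup; (F2) $\phi(F(K))=F(K)$ for every automorphism $\phi$ of $K$; (F3) if $(K,a),(H,b)\in F$ and $f$ is a vertex overlap of $K,H$, then $(K\cup_fH,f_K(a)f_H(b))\in F$. It is full if $F(K)\ne\emptyset$ for every graph $K$. *)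

theory Defs
  imports "HOL-Algebra.Coset"
begin

text \<open>Finite undirected graphs with loops allowed, no multiple edges. Vertices are natural
numbers (every finite graph is isomorphic to one of these); an edge is a set of one (loop)
or two vertices.\<close>

record graph =
  verts :: "nat set"
  edges :: "nat set set"

definition wf_graph :: "graph \<Rightarrow> bool" where
  "wf_graph G \<longleftrightarrow> finite (verts G) \<and>
     (\<forall>e\<in>edges G. e \<subseteq> verts G \<and> (card e = 1 \<or> card e = 2))"

definition N0 :: graph where "N0 = \<lparr>verts = {}, edges = {}\<rparr>"
definition N1 :: graph where "N1 = \<lparr>verts = {0}, edges = {}\<rparr>"

definition graph_iso :: "(nat \<Rightarrow> nat) \<Rightarrow> graph \<Rightarrow> graph \<Rightarrow> bool" where
  "graph_iso \<phi> K K' \<longleftrightarrow> bij_betw \<phi> (verts K) (verts K') \<and> edges K' = (\<lambda>e. \<phi> ` e) ` edges K"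

definition inj_graph_hom :: "(nat \<Rightarrow> nat) \<Rightarrow> graph \<Rightarrow> graph \<Rightarrow> bool" where
  "inj_graph_hom \<iota> H K \<longleftrightarrow> inj_on \<iota> (verts H) \<and> \<iota> ` verts H \<subseteq> verts K \<and>
     (\<forall>e\<in>edges H. \<iota> ` e \<in> edges K)"

fun red_cons :: "nat \<Rightarrow> nat list \<Rightarrow> nat list" where
  "red_cons x [] = [x]"
| "red_cons x (y # ys) = (if x = y then ys else x # y # ys)"

definition red :: "nat list \<Rightarrow> nat list" where
  "red xs = foldr red_cons xs []"

definition Z2free :: "nat set \<Rightarrow> nat list monoid" where
  "Z2free V = \<lparr>carrier = {a. set a \<subseteq> V \<and> successively (\<noteq>) a},
               mult = (\<lambda>a b. red (a @ b)), one = []\<rparr>"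

definition zhom :: "(nat \<Rightarrow> nat) \<Rightarrow> nat list \<Rightarrow> nat list" where
  "zhom \<phi> a = red (map \<phi> a)"

definition fiber :: "(graph \<times> nat list) set \<Rightarrow> graph \<Rightarrow> nat list set" where
  "fiber F K = {a. (K, a) \<in> F}"

text \<open>F is a set of pairs (K,a), a in Z_2^{*V(K)}, taken up to isomorphism: modelled as
an isomorphism-closed set of concrete pairs.\<close>
definition pair_set :: "(graph \<times> nat list) set \<Rightarrow> bool" where
  "pair_set F \<longleftrightarrow> (\<forall>(K, a)\<in>F. wf_graph K \<and> a \<in> carrier (Z2free (verts K))) \<and>
     (\<forall>K K' \<phi> a. (K, a) \<in> F \<and> wf_graph K' \<and> graph_iso \<phi> K K' \<longrightarrow> (K', zhom \<phi> a) \<in> F)"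

definition vertex_overlap :: "(nat \<times> nat) set \<Rightarrow> graph \<Rightarrow> graph \<Rightarrow> bool" where
  "vertex_overlap f K H \<longleftrightarrow> f \<subseteq> verts K \<times> verts H \<and>
     (\<forall>(v, w)\<in>f. \<forall>(v', w')\<in>f. v = v' \<longleftrightarrow> w = w')"

text \<open>G together with gK, gH is (a representative of) the glued graph K \<union>_f H with the
induced maps f_K = gK, f_H = gH.\<close>
definition glue_rep :: "(nat \<times> nat) set \<Rightarrow> graph \<Rightarrow> graph \<Rightarrow> graph \<Rightarrow> (nat \<Rightarrow> nat) \<Rightarrow> (nat \<Rightarrow> nat) \<Rightarrow> bool" where
  "glue_rep f K H G gK gH \<longleftrightarrow> wf_graph G \<and>
     inj_on gK (verts K) \<and> inj_on gH (verts H) \<and>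
     verts G = gK ` verts K \<union> gH ` verts H \<and>
     (\<forall>v\<in>verts K. \<forall>w\<in>verts H. gK v = gH w \<longleftrightarrow> (v, w) \<in> f) \<and>
     edges G = (\<lambda>e. gK ` e) ` edges K \<union> (\<lambda>e. gH ` e) ` edges H"

definition graph_fibration :: "(graph \<times> nat list) set \<Rightarrow> bool" where
  "graph_fibration F \<longleftrightarrow>
     (N0, []) \<in> F \<and> (N1, []) \<in> F \<and>
     (\<forall>K. wf_graph K \<longrightarrow> fiber F K = {} \<or> fiber F K \<lhd> Z2free (verts K)) \<and>
     (\<forall>K \<phi>. wf_graph K \<and> graph_iso \<phi> K K \<longrightarrow> zhom \<phi> ` fiber F K = fiber F K) \<and>
     (\<forall>K H a b f G gK gH. (K, a) \<in> F \<and> (H, b) \<in> F \<and> vertex_overlap f K H \<and>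
        glue_rep f K H G gK gH \<longrightarrow>
        (G, zhom gK a \<otimes>\<^bsub>Z2free (verts G)\<^esub> zhom gH b) \<in> F)"

definition full_graph_fibration :: "(graph \<times> nat list) set \<Rightarrow> bool" where
  "full_graph_fibration F \<longleftrightarrow> graph_fibration F \<and> (\<forall>K. wf_graph K \<longrightarrow> fiber F K \<noteq> {})"

end

theory Submission
  imports Defs
begin

text \<open>For a full fibration every fibre contains the neutral element, and gluing \<open>(H, a)\<close> to
\<open>(K, e)\<close> along the graph of an injective homomorphism \<open>\<iota> : H \<rightarrow> K\<close> gives back \<open>K\<close> with the element
\<open>\<iota>(a)\<close>; this is the image condition. Conversely, both structure maps of a glued graph
\<open>K \<union>\<^sub>f H\<close> are injective homomorphisms, so (F3) follows from the image condition and closure of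
\<open>F(K \<union>\<^sub>f H)\<close> under products, while (F2) already holds for any isomorphism-closed set of pairs,
since an automorphism has an inverse automorphism.\<close>

lemma red_Cons: "red (x # xs) = red_cons x (red xs)"
  by (simp add: red_def)

lemma red_Nil [simp]: "red [] = []"
  by (simp add: red_def)

lemma successively_red_cons:
  "successively (\<noteq>) ys \<Longrightarrow> successively (\<noteq>) (red_cons x ys)"
  by (cases ys) (auto simp: successively_Cons)

lemma successively_red: "successively (\<noteq>) (red xs)"
  by (induction xs) (auto simp: red_Cons successively_red_cons)

lemma red_reduced: "successively (\<noteq>) xs \<Longrightarrow> red xs = xs"
proof (induction xs)
  case (Cons x xs)
  then have "red xs = xs" by (cases xs) auto
  with Cons.prems show ?case by (cases xs) (auto simp: red_Cons)
qed simp

lemma red_red [simp]: "red (red xs) = red xs"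
  by (rule red_reduced[OF successively_red])

lemma red_cons_red_cons: "successively (\<noteq>) w \<Longrightarrow> red_cons x (red_cons x w) = w"
  by (cases w rule: remdups_adj.cases) auto

lemma red_map_red_cons:
  "red (map \<phi> (red_cons x zs)) = red_cons (\<phi> x) (red (map \<phi> zs))"
  by (cases zs) (auto simp: red_Cons red_cons_red_cons successively_red)

lemma red_map_red: "red (map \<phi> (red xs)) = red (map \<phi> xs)"
  by (induction xs) (simp_all add: red_Cons red_map_red_cons)

lemma Z2free_one [simp]: "\<one>\<^bsub>Z2free V\<^esub> = []"
  by (simp add: Z2free_def)

lemma zhom_Nil [simp]: "zhom \<phi> [] = []"
  by (simp add: zhom_def)

lemma zhom_comp: "zhom \<phi> (zhom \<psi> a) = zhom (\<phi> \<circ> \<psi>) a"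
  by (simp add: zhom_def red_map_red)

lemma zhom_eq_self:
  assumes "a \<in> carrier (Z2free V)" and "\<And>x. x \<in> V \<Longrightarrow> \<phi> x = x"
  shows "zhom \<phi> a = a"
proof -
  have "map \<phi> a = a" using assms by (auto simp: Z2free_def intro: map_idI)
  with assms(1) show ?thesis by (simp add: zhom_def Z2free_def red_reduced)
qed

lemma Z2free_mult_Nil_right: "a \<otimes>\<^bsub>Z2free V\<^esub> [] = red a"
  by (simp add: Z2free_def)

lemma graph_iso_inv_into:
  assumes "wf_graph K" and iso: "graph_iso \<phi> K K'"
  shows "graph_iso (inv_into (verts K) \<phi>) K' K"
proof -
  let ?\<psi> = "inv_into (verts K) \<phi>"
  have bij: "bij_betw \<phi> (verts K) (verts K')" and E: "edges K' = (\<lambda>e. \<phi> ` e) ` edges K"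
    using iso by (auto simp: graph_iso_def)
  have "?\<psi> ` \<phi> ` e = e" if "e \<in> edges K" for e
  proof -
    have "e \<subseteq> verts K" using \<open>wf_graph K\<close> that by (auto simp: wf_graph_def)
    with bij show ?thesis by (simp add: bij_betw_def image_inv_into_cancel)
  qed
  then have "(\<lambda>e. ?\<psi> ` e) ` edges K' = edges K"
    unfolding E image_image by simp
  with bij_betw_inv_into[OF bij] show ?thesis by (simp add: graph_iso_def)
qed

lemma glue_rep_inj_graph_hom_left:
  "glue_rep f K H G gK gH \<Longrightarrow> inj_graph_hom gK K G"
  unfolding glue_rep_def inj_graph_hom_def by auto

lemma glue_rep_inj_graph_hom_right:
  "glue_rep f K H G gK gH \<Longrightarrow> inj_graph_hom gH H G"
  unfolding glue_rep_def inj_graph_hom_def by auto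

lemma vertex_overlap_graph_of_inj_graph_hom:
  "inj_graph_hom \<iota> H K \<Longrightarrow> vertex_overlap {(v, \<iota> v) | v. v \<in> verts H} H K"
  unfolding vertex_overlap_def inj_graph_hom_def inj_on_def by auto

lemma glue_rep_graph_of_inj_graph_hom:
  assumes "wf_graph K" and hom: "inj_graph_hom \<iota> H K"
  shows "glue_rep {(v, \<iota> v) | v. v \<in> verts H} H K K \<iota> id"
proof -
  have "verts K = \<iota> ` verts H \<union> id ` verts K"
    and "edges K = (\<lambda>e. \<iota> ` e) ` edges H \<union> (\<lambda>e. id ` e) ` edges K"
    using hom unfolding inj_graph_hom_def by auto
  with assms show ?thesis unfolding glue_rep_def inj_graph_hom_def inj_on_def by auto
qed

lemma Nil_in_fiber: "fiber F K \<lhd> Z2free V \<Longrightarrow> (K, []) \<in> F"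
  using subgroup.one_closed[OF normal_imp_subgroup] by (fastforce simp: fiber_def)

lemma pair_set_image_fiber_graph_iso:
  assumes F: "pair_set F" and "wf_graph K" "wf_graph K'" and iso: "graph_iso \<phi> K K'"
  shows "zhom \<phi> ` fiber F K = fiber F K'"
proof
  show "zhom \<phi> ` fiber F K \<subseteq> fiber F K'"
    using F \<open>wf_graph K'\<close> iso by (auto simp: pair_set_def fiber_def)
next
  let ?\<psi> = "inv_into (verts K) \<phi>"
  have iso': "graph_iso ?\<psi> K' K" by (rule graph_iso_inv_into[OF \<open>wf_graph K\<close> iso])
  have bij: "bij_betw \<phi> (verts K) (verts K')" using iso by (simp add: graph_iso_def)
  show "fiber F K' \<subseteq> zhom \<phi> ` fiber F K"
  proof
    fix a assume a: "a \<in> fiber F K'"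
    then have "zhom ?\<psi> a \<in> fiber F K"
      using F \<open>wf_graph K\<close> iso' by (auto simp: pair_set_def fiber_def)
    moreover have "zhom \<phi> (zhom ?\<psi> a) = a"
      unfolding zhom_comp
    proof (rule zhom_eq_self)
      show "a \<in> carrier (Z2free (verts K'))" using F a by (auto simp: pair_set_def fiber_def)
      show "(\<phi> \<circ> ?\<psi>) x = x" if "x \<in> verts K'" for x
        using bij that by (simp add: bij_betw_def f_inv_into_f)
    qed
    ultimately show "a \<in> zhom \<phi> ` fiber F K" by (metis image_eqI)
  qed
qed

lemma graph_fibration_fiber_normal:
  "graph_fibration F \<Longrightarrow> wf_graph K \<Longrightarrow> fiber F K \<noteq> {} \<Longrightarrow> fiber F K \<lhd> Z2free (verts K)"
  unfolding graph_fibration_def by blast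

lemma graph_fibration_glue:
  assumes "graph_fibration F" and "(K, a) \<in> F" "(H, b) \<in> F"
    and "vertex_overlap f K H" "glue_rep f K H G gK gH"
  shows "(G, zhom gK a \<otimes>\<^bsub>Z2free (verts G)\<^esub> zhom gH b) \<in> F"
proof -
  have "\<forall>K H a b f G gK gH. (K, a) \<in> F \<and> (H, b) \<in> F \<and> vertex_overlap f K H \<and>
        glue_rep f K H G gK gH \<longrightarrow> (G, zhom gK a \<otimes>\<^bsub>Z2free (verts G)\<^esub> zhom gH b) \<in> F"
    using assms(1) unfolding graph_fibration_def by (elim conjE)
  with assms(2-) show ?thesis by blast
qed

lemma graph_fibration_image_fiber_subset:
  assumes F: "graph_fibration F" and "wf_graph K" and ne: "fiber F K \<noteq> {}"
    and hom: "inj_graph_hom \<iota> H K"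
  shows "zhom \<iota> ` fiber F H \<subseteq> fiber F K"
proof
  fix c assume "c \<in> zhom \<iota> ` fiber F H"
  then obtain a where a: "(H, a) \<in> F" and c: "c = zhom \<iota> a" by (auto simp: fiber_def)
  have "(K, []) \<in> F"
    using graph_fibration_fiber_normal[OF F \<open>wf_graph K\<close> ne] by (rule Nil_in_fiber)
  from graph_fibration_glue[OF F a this vertex_overlap_graph_of_inj_graph_hom[OF hom]
      glue_rep_graph_of_inj_graph_hom[OF \<open>wf_graph K\<close> hom]]
  show "c \<in> fiber F K" by (simp add: c fiber_def Z2free_mult_Nil_right zhom_def)
qed

lemma full_graph_fibrationI:
  assumes F: "pair_set F"
    and normal: "\<And>K. wf_graph K \<Longrightarrow> fiber F K \<lhd> Z2free (verts K)"
    and image: "\<And>H K \<iota>. wf_graph H \<Longrightarrow> wf_graph K \<Longrightarrow> inj_graph_hom \<iota> H K \<Longrightarrow>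
                   zhom \<iota> ` fiber F H \<subseteq> fiber F K"
  shows "full_graph_fibration F"
proof -
  have wf: "wf_graph K" if "(K, a) \<in> F" for K a
    using F that by (auto simp: pair_set_def)
  have glue: "(G, zhom gK a \<otimes>\<^bsub>Z2free (verts G)\<^esub> zhom gH b) \<in> F"
    if a: "(K, a) \<in> F" and b: "(H, b) \<in> F" and g: "glue_rep f K H G gK gH" for K H a b f G gK gH
  proof -
    have G: "wf_graph G" using g by (simp add: glue_rep_def)
    have "zhom gK a \<in> fiber F G"
      using image[OF wf[OF a] G glue_rep_inj_graph_hom_left[OF g]] a by (force simp: fiber_def)
    moreover have "zhom gH b \<in> fiber F G"
      using image[OF wf[OF b] G glue_rep_inj_graph_hom_right[OF g]] b by (force simp: fiber_def)
    ultimately show ?thesis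
      using subgroup.m_closed[OF normal_imp_subgroup[OF normal[OF G]]] by (simp add: fiber_def)
  qed
  have Nil: "(K, []) \<in> F" if "wf_graph K" for K
    using normal[OF that] by (rule Nil_in_fiber)
  have "wf_graph N0" "wf_graph N1" by (auto simp: wf_graph_def N0_def N1_def)
  then show ?thesis
    unfolding full_graph_fibration_def graph_fibration_def
  proof (intro conjI allI impI)
    show "(N0, []) \<in> F" "(N1, []) \<in> F" using Nil \<open>wf_graph N0\<close> \<open>wf_graph N1\<close> by blast+
  next
    fix K assume K: "wf_graph K"
    show "fiber F K = {} \<or> fiber F K \<lhd> Z2free (verts K)" using normal[OF K] ..
    show "fiber F K \<noteq> {}" using Nil[OF K] by (auto simp: fiber_def)
  next
    fix K \<phi> assume "wf_graph K \<and> graph_iso \<phi> K K"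
    then show "zhom \<phi> ` fiber F K = fiber F K" using pair_set_image_fiber_graph_iso[OF F] by blast
  next
    fix K H a b f G gK gH
    assume "(K, a) \<in> F \<and> (H, b) \<in> F \<and> vertex_overlap f K H \<and> glue_rep f K H G gK gH"
    then show "(G, zhom gK a \<otimes>\<^bsub>Z2free (verts G)\<^esub> zhom gH b) \<in> F" using glue by blast
  qed
qed

theorem proposition2p17:
  assumes "pair_set F"
  shows "full_graph_fibration F \<longleftrightarrow>
    (\<forall>K. wf_graph K \<longrightarrow> fiber F K \<lhd> Z2free (verts K)) \<and>
    (\<forall>H K \<iota>. wf_graph H \<and> wf_graph K \<and> inj_graph_hom \<iota> H K \<longrightarrow>
       zhom \<iota> ` fiber F H \<subseteq> fiber F K)"
    (is "_ \<longleftrightarrow> ?normal \<and> ?image")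
proof
  assume "full_graph_fibration F"
  then have fib: "graph_fibration F" and ne: "\<And>K. wf_graph K \<Longrightarrow> fiber F K \<noteq> {}"
    unfolding full_graph_fibration_def by simp_all
  show "?normal \<and> ?image"
    using graph_fibration_fiber_normal[OF fib _ ne] graph_fibration_image_fiber_subset[OF fib _ ne]
    by blast
next
  assume "?normal \<and> ?image"
  then show "full_graph_fibration F"
    by (intro full_graph_fibrationI[OF assms]) simp_all
qed

end
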